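(* Let $d$ be even, let $\nu:\mathbb R\to\mathbb R$ satisfy $\nu(x+y)=\nu(x)+\nu(y)$ for all $x,y$, and let $A\in\mathbb R^{d\times d}$ be invertible. Suppose $S(x):=AQ_d^\nu(x)A^{-1}$ is an orthogonal matrix for every $x\ge0$ (with respect to the standard inner product on $\mathbb R^d$). Then there exists an orthogonal matrix $U\in\mathbb R^{d\times d}$ such that $S(x)=UQ_d^\nu(x)U^{\mathrm T}$ for all $x\ge0$.
   Context: For $\theta\in\mathbb R$, $Q(\theta)=\begin{pmatrix}\cos\theta&\sin\theta\\-\sin\theta&\cos\theta\end{pmatrix}$, and for even $k$, $Q_k^\nu(x)\in\mathbb R^{k\times k}$ is the block-diagonal matrix with $k/2$ diagonal blocks all equal to $Q(\nu(x))$. *)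

theory Defs
  imports Complex_Main "Jordan_Normal_Form.Matrix"
begin

text \<open>Block-diagonal rotation matrix Q_k(theta), indices 0-based: the j-th 2x2 block
  occupies rows/cols 2j, 2j+1 and equals [[cos, sin], [-sin, cos]].\<close>
definition Qblk :: "nat \<Rightarrow> real \<Rightarrow> real mat" where
  "Qblk k \<theta> = mat k k (\<lambda>(i, j).
     if i div 2 \<noteq> j div 2 then 0
     else if i = j then cos \<theta>
     else if even i then sin \<theta>
     else - sin \<theta>)"

definition orth_mat :: "nat \<Rightarrow> real mat \<Rightarrow> bool" where
  "orth_mat d U \<longleftrightarrow> U \<in> carrier_mat d d \<and> transpose_mat U * U = 1\<^sub>m d"

end

theory Submission
  imports Defs "Jordan_Normal_Form.Determinant"
begin

text \<open>Write \<open>Qblk d t = cos t \<cdot> 1 + sin t \<cdot> J\<close> with \<open>J = Qblk d (pi / 2)\<close>, so that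
  \<open>A Q(t) A\<^sup>-\<^sup>1 = cos t \<cdot> 1 + sin t \<cdot> K\<close> with \<open>K = A J A\<^sup>-\<^sup>1\<close> and \<open>K\<^sup>2 = -1\<close>. If every
  \<open>sin (\<nu> x)\<close> vanishes, \<open>A Q A\<^sup>-\<^sup>1 = Q\<close> and \<open>U = 1\<close> works. Otherwise one orthogonal
  \<open>cos t \<cdot> 1 + sin t \<cdot> K\<close> with \<open>sin t \<noteq> 0\<close> has inverse \<open>cos t \<cdot> 1 - sin t \<cdot> K\<close>, which must be its
  transpose, so \<open>K\<close> is skew-symmetric. A skew-symmetric \<open>K\<close> with \<open>K\<^sup>2 = -1\<close> has an orthonormal
  basis of pairs \<open>(K v, v)\<close>, built by repeatedly extending an orthonormal family, and in that
  basis \<open>K\<close> becomes \<open>J\<close>: \<open>K = U J U\<^sup>T\<close>, whence \<open>A Q(t) A\<^sup>-\<^sup>1 = U Q(t) U\<^sup>T\<close> for every \<open>t\<close>.\<close>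

definition partner :: "nat \<Rightarrow> nat" where
  "partner i = (if even i then Suc i else i - 1)"

text \<open>\<open>Jblk k = Qblk k (pi / 2)\<close>, the generator of the rotations \<open>Qblk k\<close>.\<close>
definition Jblk :: "nat \<Rightarrow> real mat" where
  "Jblk k = mat k k (\<lambda>(i, j). if i = partner j then (if even j then -1 else 1) else 0)"

lemma partner_partner [simp]: "partner (partner i) = i"
  by (auto simp: partner_def)

lemma even_partner [simp]: "even (partner i) \<longleftrightarrow> odd i"
  by (auto simp: partner_def)

lemma partner_less: "even d \<Longrightarrow> i < d \<Longrightarrow> partner i < d"
  by (auto simp: partner_def elim!: evenE)

lemma eq_partner_iff: "i = partner j \<longleftrightarrow> i div 2 = j div 2 \<and> i \<noteq> j"
  by (auto simp: partner_def elim!: evenE oddE)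

lemma Jblk_carrier [simp]: "Jblk k \<in> carrier_mat k k"
  and dim_row_Jblk [simp]: "dim_row (Jblk k) = k"
  and dim_col_Jblk [simp]: "dim_col (Jblk k) = k"
  by (simp_all add: Jblk_def)

lemma index_Jblk [simp]:
  "i < k \<Longrightarrow> j < k \<Longrightarrow> Jblk k $$ (i, j) = (if i = partner j then (if even j then -1 else 1) else 0)"
  by (simp add: Jblk_def)

lemma Qblk_carrier [simp]: "Qblk k t \<in> carrier_mat k k"
  by (simp add: Qblk_def)

lemma Qblk_eq_cos_sin: "Qblk k t = cos t \<cdot>\<^sub>m 1\<^sub>m k + sin t \<cdot>\<^sub>m Jblk k"
  by (rule eq_matI) (auto simp: Qblk_def eq_partner_iff, presburger+)

lemma index_mult_mat_sum:
  assumes "A \<in> carrier_mat n m" "B \<in> carrier_mat m p" "i < n" "j < p"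
  shows "(A * B) $$ (i, j) = (\<Sum>l = 0..<m. A $$ (i, l) * B $$ (l, j))"
  using assms by (auto simp: scalar_prod_def intro!: sum.cong)

lemma Jblk_square: assumes "even d" shows "Jblk d * Jblk d = - 1\<^sub>m d"
proof (rule eq_matI)
  fix i j assume "i < dim_row (- 1\<^sub>m d)" "j < dim_col (- 1\<^sub>m d)"
  then have i: "i < d" and j: "j < d" by auto
  have pj: "partner j < d" using partner_less[OF assms j] .
  have col_j: "Jblk d $$ (l, j) = (if l = partner j then (if even j then -1 else 1) else 0)"
    if "l < d" for l
    using that j by simp
  have "(Jblk d * Jblk d) $$ (i, j) = (\<Sum>l = 0..<d. Jblk d $$ (i, l) * Jblk d $$ (l, j))"
    using i j by (intro index_mult_mat_sum) auto
  also have "\<dots> = (\<Sum>l = 0..<d. if l = partner j then Jblk d $$ (i, l) * (if even j then -1 else 1) else 0)"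
    by (intro sum.cong refl) (simp add: col_j del: index_Jblk)
  also have "\<dots> = Jblk d $$ (i, partner j) * (if even j then -1 else 1)"
    using pj by simp
  also have "\<dots> = (- 1\<^sub>m d) $$ (i, j)"
    using i j pj by auto
  finally show "(Jblk d * Jblk d) $$ (i, j) = (- 1\<^sub>m d) $$ (i, j)" .
qed auto

lemma smult_mult_smult_mat:
  fixes X Y :: "'a :: comm_ring_1 mat"
  assumes X: "X \<in> carrier_mat n n" and Y: "Y \<in> carrier_mat n n"
  shows "(a \<cdot>\<^sub>m X) * (b \<cdot>\<^sub>m Y) = (a * b) \<cdot>\<^sub>m (X * Y)"
proof -
  have "(a \<cdot>\<^sub>m X) * (b \<cdot>\<^sub>m Y) = a \<cdot>\<^sub>m (b \<cdot>\<^sub>m (X * Y))"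
    using mult_smult_assoc_mat[OF X smult_carrier_mat[OF Y]] mult_smult_distrib[OF X Y] by simp
  then show ?thesis by (auto intro!: eq_matI)
qed

lemma similar_scalar_plus_smult:
  fixes A B M :: "'a :: comm_ring_1 mat"
  assumes A: "A \<in> carrier_mat n n" and B: "B \<in> carrier_mat n n" and M: "M \<in> carrier_mat n n"
    and AB: "A * B = 1\<^sub>m n"
  shows "A * (c \<cdot>\<^sub>m 1\<^sub>m n + s \<cdot>\<^sub>m M) * B = c \<cdot>\<^sub>m 1\<^sub>m n + s \<cdot>\<^sub>m (A * M * B)"
proof -
  have I: "1\<^sub>m n \<in> carrier_mat n n" by simp
  have "A * (c \<cdot>\<^sub>m 1\<^sub>m n + s \<cdot>\<^sub>m M) = c \<cdot>\<^sub>m A + s \<cdot>\<^sub>m (A * M)"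
    using A M mult_add_distrib_mat[OF A smult_carrier_mat[OF I] smult_carrier_mat[OF M]]
      mult_smult_distrib[OF A I] mult_smult_distrib[OF A M] by simp
  moreover have "(c \<cdot>\<^sub>m A + s \<cdot>\<^sub>m (A * M)) * B = c \<cdot>\<^sub>m (A * B) + s \<cdot>\<^sub>m (A * M * B)"
    using A M B add_mult_distrib_mat[of "c \<cdot>\<^sub>m A" n n "s \<cdot>\<^sub>m (A * M)" B n]
      mult_smult_assoc_mat[OF A B] mult_smult_assoc_mat[of "A * M" n n B n] by simp
  ultimately show ?thesis using AB by simp
qed

lemma similar_square:
  fixes A B M :: "'a :: comm_ring_1 mat"
  assumes A: "A \<in> carrier_mat n n" and B: "B \<in> carrier_mat n n" and M: "M \<in> carrier_mat n n"
    and BA: "B * A = 1\<^sub>m n"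
  shows "(A * M * B) * (A * M * B) = A * (M * M) * B"
proof -
  have AM: "A * M \<in> carrier_mat n n" and MB: "M * B \<in> carrier_mat n n" using A B M by auto
  have "(A * M * B) * (A * M * B) = A * M * (B * (A * (M * B)))"
    using assoc_mult_mat[OF AM B mult_carrier_mat[OF AM B]] assoc_mult_mat[OF A M B] by simp
  also have "B * (A * (M * B)) = M * B"
    using assoc_mult_mat[OF B A MB] BA left_mult_one_mat[OF MB] by simp
  also have "A * M * (M * B) = A * (M * M) * B"
    using assoc_mult_mat[OF AM M B] assoc_mult_mat[OF A M M] by simp
  finally show ?thesis .
qed

lemma scalar_plus_smult_mult_conj:
  fixes K :: "'a :: comm_ring_1 mat"
  assumes K: "K \<in> carrier_mat n n" and KK: "K * K = - 1\<^sub>m n"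
  shows "(c \<cdot>\<^sub>m 1\<^sub>m n + s \<cdot>\<^sub>m K) * (c \<cdot>\<^sub>m 1\<^sub>m n + (- s) \<cdot>\<^sub>m K) = (c\<^sup>2 + s\<^sup>2) \<cdot>\<^sub>m 1\<^sub>m n"
proof -
  have I: "1\<^sub>m n \<in> carrier_mat n n" by simp
  have "(c \<cdot>\<^sub>m 1\<^sub>m n + s \<cdot>\<^sub>m K) * (c \<cdot>\<^sub>m 1\<^sub>m n + (- s) \<cdot>\<^sub>m K)
      = (c \<cdot>\<^sub>m 1\<^sub>m n) * (c \<cdot>\<^sub>m 1\<^sub>m n + (- s) \<cdot>\<^sub>m K) + (s \<cdot>\<^sub>m K) * (c \<cdot>\<^sub>m 1\<^sub>m n + (- s) \<cdot>\<^sub>m K)"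
    using K by (intro add_mult_distrib_mat) auto
  also have "(c \<cdot>\<^sub>m 1\<^sub>m n) * (c \<cdot>\<^sub>m 1\<^sub>m n + (- s) \<cdot>\<^sub>m K)
      = (c \<cdot>\<^sub>m 1\<^sub>m n) * (c \<cdot>\<^sub>m 1\<^sub>m n) + (c \<cdot>\<^sub>m 1\<^sub>m n) * ((- s) \<cdot>\<^sub>m K)"
    using K by (intro mult_add_distrib_mat) auto
  also have "(s \<cdot>\<^sub>m K) * (c \<cdot>\<^sub>m 1\<^sub>m n + (- s) \<cdot>\<^sub>m K)
      = (s \<cdot>\<^sub>m K) * (c \<cdot>\<^sub>m 1\<^sub>m n) + (s \<cdot>\<^sub>m K) * ((- s) \<cdot>\<^sub>m K)"
    using K by (intro mult_add_distrib_mat) auto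
  also have "(c \<cdot>\<^sub>m 1\<^sub>m n) * (c \<cdot>\<^sub>m 1\<^sub>m n) + (c \<cdot>\<^sub>m 1\<^sub>m n) * ((- s) \<cdot>\<^sub>m K)
      + ((s \<cdot>\<^sub>m K) * (c \<cdot>\<^sub>m 1\<^sub>m n) + (s \<cdot>\<^sub>m K) * ((- s) \<cdot>\<^sub>m K)) = (c\<^sup>2 + s\<^sup>2) \<cdot>\<^sub>m 1\<^sub>m n"
    unfolding smult_mult_smult_mat[OF I I] smult_mult_smult_mat[OF I K]
      smult_mult_smult_mat[OF K I] smult_mult_smult_mat[OF K K]
    using K KK by (intro eq_matI) (auto simp: algebra_simps power2_eq_square)
  finally show ?thesis .
qed

lemma skew_if_orth_scalar_plus_smult:
  fixes K :: "real mat"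
  assumes K: "K \<in> carrier_mat n n" and KK: "K * K = - 1\<^sub>m n"
    and cs: "c\<^sup>2 + s\<^sup>2 = 1" and s: "s \<noteq> 0"
    and orth: "orth_mat n (c \<cdot>\<^sub>m 1\<^sub>m n + s \<cdot>\<^sub>m K)"
  shows "transpose_mat K = - K"
proof -
  define S where "S = c \<cdot>\<^sub>m 1\<^sub>m n + s \<cdot>\<^sub>m K"
  define X where "X = c \<cdot>\<^sub>m 1\<^sub>m n + (- s) \<cdot>\<^sub>m K"
  have S: "S \<in> carrier_mat n n" and X: "X \<in> carrier_mat n n"
    using K by (auto simp: S_def X_def)
  have "S * X = (c\<^sup>2 + s\<^sup>2) \<cdot>\<^sub>m 1\<^sub>m n"
    unfolding S_def X_def by (rule scalar_plus_smult_mult_conj[OF K KK])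
  then have "S * X = 1\<^sub>m n" using cs by (auto intro!: eq_matI)
  then have "transpose_mat S = transpose_mat S * (S * X)" using S by simp
  also have "\<dots> = X"
    using orth S X by (simp add: S_def[symmetric] orth_mat_def assoc_mult_mat[symmetric, of _ n n S n X n])
  finally have ST: "transpose_mat S = X" .
  show ?thesis
  proof (rule eq_matI)
    fix i j assume "i < dim_row (- K)" "j < dim_col (- K)"
    then have i: "i < n" and j: "j < n" using K by auto
    have "s * K $$ (j, i) = s * - K $$ (i, j)"
      using arg_cong[OF ST, of "\<lambda>M. M $$ (i, j)"] i j K by (auto simp: S_def X_def split: if_splits)
    then have "K $$ (j, i) = - K $$ (i, j)" using s by (metis minus_mult_right mult_left_cancel)
    then show "transpose_mat K $$ (i, j) = (- K) $$ (i, j)" using i j K by simp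
  qed (use K in auto)
qed

definition orthonormal_upto :: "nat \<Rightarrow> nat \<Rightarrow> (nat \<Rightarrow> real vec) \<Rightarrow> bool" where
  "orthonormal_upto d n u \<longleftrightarrow> (\<forall>k<n. u k \<in> carrier_vec d) \<and>
     (\<forall>k<n. \<forall>l<n. u k \<bullet> u l = (if k = l then 1 else 0))"

text \<open>The unit vector \<open>e\<^sub>i\<close> minus its orthogonal projection onto the span of \<open>u 0, \<dots>, u (n - 1)\<close>.\<close>
definition orth_residual :: "nat \<Rightarrow> nat \<Rightarrow> (nat \<Rightarrow> real vec) \<Rightarrow> nat \<Rightarrow> real vec" where
  "orth_residual d n u i = vec d (\<lambda>l. (if l = i then 1 else 0) - (\<Sum>k = 0..<n. u k $ i * u k $ l))"

lemma orthonormal_uptoD: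
  assumes "orthonormal_upto d n u" and "k < n"
  shows "u k \<in> carrier_vec d" and "l < n \<Longrightarrow> u k \<bullet> u l = (if k = l then 1 else 0)"
  using assms by (auto simp: orthonormal_upto_def)

lemma orth_residual_carrier [simp]: "orth_residual d n u i \<in> carrier_vec d"
  by (simp add: orth_residual_def)

lemma orth_residual_orthogonal:
  assumes u: "orthonormal_upto d n u" and i: "i < d" and k: "k < n"
  shows "orth_residual d n u i \<bullet> u k = 0"
proof -
  have uk: "u k \<in> carrier_vec d" using orthonormal_uptoD(1)[OF u k] .
  have "orth_residual d n u i \<bullet> u k
      = (\<Sum>l = 0..<d. ((if l = i then 1 else 0) - (\<Sum>m = 0..<n. u m $ i * u m $ l)) * u k $ l)"
    using uk by (simp add: orth_residual_def scalar_prod_def)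
  also have "\<dots> = (\<Sum>l = 0..<d. (if l = i then 1 else 0) * u k $ l)
      - (\<Sum>l = 0..<d. \<Sum>m = 0..<n. u m $ i * (u m $ l * u k $ l))"
    by (simp add: left_diff_distrib sum_subtractf sum_distrib_right mult.assoc)
  also have "(\<Sum>l = 0..<d. (if l = i then 1 else 0) * u k $ l) = (\<Sum>l = 0..<d. if l = i then u k $ l else 0)"
    by (rule sum.cong) auto
  also have "\<dots> = u k $ i" using i by simp
  also have "(\<Sum>l = 0..<d. \<Sum>m = 0..<n. u m $ i * (u m $ l * u k $ l)) = (\<Sum>m = 0..<n. u m $ i * (u m \<bullet> u k))"
    using uk by (subst sum.swap) (simp add: scalar_prod_def sum_distrib_left)
  also have "\<dots> = (\<Sum>m = 0..<n. if m = k then u k $ i else 0)"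
    using orthonormal_uptoD(2)[OF u] k by (intro sum.cong) auto
  finally show ?thesis using i k by simp
qed

lemma orth_residual_nonzero:
  assumes u: "orthonormal_upto d n u" and "n < d"
  shows "\<exists>i<d. orth_residual d n u i \<noteq> 0\<^sub>v d"
proof (rule ccontr)
  assume "\<not> ?thesis"
  then have "\<forall>i<d. orth_residual d n u i $ i = 0" by auto
  then have diag: "(\<Sum>k = 0..<n. u k $ i * u k $ i) = 1" if "i < d" for i
    using that by (simp add: orth_residual_def)
  \<comment> \<open>taking the trace of \<open>1\<^sub>m d = \<Sum>\<^sub>k u\<^sub>k u\<^sub>k\<^sup>T\<close> gives \<open>d = n\<close>\<close>
  have "real d = (\<Sum>i = 0..<d. \<Sum>k = 0..<n. u k $ i * u k $ i)"
    using diag by simp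
  also have "\<dots> = (\<Sum>k = 0..<n. \<Sum>i = 0..<d. u k $ i * u k $ i)"
    by (rule sum.swap)
  also have "\<dots> = (\<Sum>k = 0..<n. u k \<bullet> u k)"
  proof (rule sum.cong)
    fix k assume "k \<in> {0..<n}"
    then have "u k \<in> carrier_vec d" using orthonormal_uptoD(1)[OF u] by simp
    then show "(\<Sum>i = 0..<d. u k $ i * u k $ i) = u k \<bullet> u k" by (simp add: scalar_prod_def)
  qed simp
  also have "\<dots> = real n"
    using orthonormal_uptoD(2)[OF u] by simp
  finally show False using \<open>n < d\<close> by simp
qed

lemma scalar_prod_self_pos:
  assumes v: "(v :: real vec) \<in> carrier_vec d" and "v \<noteq> 0\<^sub>v d"
  shows "0 < v \<bullet> v"
proof -
  obtain l where l: "l < d" "v $ l \<noteq> 0"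
  proof (rule ccontr)
    assume "\<not> thesis"
    then have "v = 0\<^sub>v d" using v that by (intro eq_vecI) auto
    then show False using \<open>v \<noteq> 0\<^sub>v d\<close> by simp
  qed
  have "0 < (\<Sum>l = 0..<d. (v $ l)\<^sup>2)" using l by (intro sum_pos2[of _ l]) auto
  then show ?thesis using v by (simp add: scalar_prod_def power2_eq_square)
qed

lemma orthonormal_extension:
  assumes u: "orthonormal_upto d n u" and "n < d"
  shows "\<exists>v \<in> carrier_vec d. v \<bullet> v = 1 \<and> (\<forall>k<n. v \<bullet> u k = 0)"
proof -
  obtain i where i: "i < d" and w0: "orth_residual d n u i \<noteq> 0\<^sub>v d"
    using orth_residual_nonzero[OF assms] by blast
  define w where "w = orth_residual d n u i"
  have w: "w \<in> carrier_vec d" and pos: "0 < w \<bullet> w"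
    using scalar_prod_self_pos[of w d] w0 by (auto simp: w_def)
  define v where "v = (1 / sqrt (w \<bullet> w)) \<cdot>\<^sub>v w"
  have "v \<bullet> v = (w \<bullet> w) / (sqrt (w \<bullet> w))\<^sup>2"
    using w by (simp add: v_def power2_eq_square)
  then have "v \<bullet> v = 1" using pos by simp
  moreover have "v \<bullet> u k = 0" if "k < n" for k
  proof -
    have "u k \<in> carrier_vec d" using orthonormal_uptoD(1)[OF u that] .
    then show ?thesis using orth_residual_orthogonal[OF u i that] w by (simp add: v_def w_def)
  qed
  moreover have "v \<in> carrier_vec d" using w by (simp add: v_def)
  ultimately show ?thesis by blast
qed

definition frame_mat :: "nat \<Rightarrow> (nat \<Rightarrow> real vec) \<Rightarrow> real mat" where
  "frame_mat d u = mat d d (\<lambda>(i, j). u j $ i)"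

lemma frame_mat_carrier [simp]: "frame_mat d u \<in> carrier_mat d d"
  and dim_row_frame_mat [simp]: "dim_row (frame_mat d u) = d"
  and dim_col_frame_mat [simp]: "dim_col (frame_mat d u) = d"
  by (simp_all add: frame_mat_def)

lemma orth_mat_frame_mat:
  assumes u: "orthonormal_upto d d u"
  shows "orth_mat d (frame_mat d u)"
proof -
  have "transpose_mat (frame_mat d u) * frame_mat d u = 1\<^sub>m d"
  proof (rule eq_matI)
    fix i j assume "i < dim_row (1\<^sub>m d :: real mat)" "j < dim_col (1\<^sub>m d :: real mat)"
    then have i: "i < d" and j: "j < d" by auto
    have "(transpose_mat (frame_mat d u) * frame_mat d u) $$ (i, j) = u i \<bullet> u j"
      using i j orthonormal_uptoD(1)[OF u j] by (auto simp: frame_mat_def scalar_prod_def intro!: sum.cong)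
    then show "(transpose_mat (frame_mat d u) * frame_mat d u) $$ (i, j) = 1\<^sub>m d $$ (i, j)"
      using orthonormal_uptoD(2)[OF u i j] i j by simp
  qed (simp_all add: frame_mat_def)
  then show ?thesis by (simp add: orth_mat_def)
qed

lemma mult_frame_mat_eq_frame_mat_mult_Jblk:
  assumes K: "K \<in> carrier_mat d d" and d: "even d"
    and u: "\<And>j. j < d \<Longrightarrow> u j \<in> carrier_vec d"
    and Ku: "\<And>j. j < d \<Longrightarrow> K *\<^sub>v u j = (if even j then -1 else 1) \<cdot>\<^sub>v u (partner j)"
  shows "K * frame_mat d u = frame_mat d u * Jblk d"
proof (rule eq_matI)
  fix i j assume "i < dim_row (frame_mat d u * Jblk d)" "j < dim_col (frame_mat d u * Jblk d)"
  then have i: "i < d" and j: "j < d" by (auto simp: frame_mat_def)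
  have pj: "partner j < d" using partner_less[OF d j] .
  have "(K * frame_mat d u) $$ (i, j) = (K *\<^sub>v u j) $ i"
    using K i j u[OF j] by (auto simp: frame_mat_def scalar_prod_def intro!: sum.cong)
  also have "\<dots> = (if even j then -1 else 1) * u (partner j) $ i"
    using Ku[OF j] u[OF pj] i by simp
  also have "\<dots> = (\<Sum>l = 0..<d. frame_mat d u $$ (i, l) * Jblk d $$ (l, j))"
    using i j pj by (simp add: frame_mat_def mult.commute if_distrib cong: if_cong)
  also have "\<dots> = (frame_mat d u * Jblk d) $$ (i, j)"
    using i j by (intro index_mult_mat_sum[symmetric]) auto
  finally show "(K * frame_mat d u) $$ (i, j) = (frame_mat d u * Jblk d) $$ (i, j)" .
qed (use K in auto)

lemma orth_mat_mult_transpose: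
  assumes "orth_mat d U"
  shows "U * transpose_mat U = 1\<^sub>m d"
  using assms mat_mult_left_right_inverse[of "transpose_mat U" d U] by (simp add: orth_mat_def)

locale orthogonal_complex_structure =
  fixes d :: nat and K :: "real mat"
  assumes carrier: "K \<in> carrier_mat d d"
    and skew: "transpose_mat K = - K"
    and square: "K * K = - 1\<^sub>m d"
begin

lemma mult_vec_carrier [simp]: "w \<in> carrier_vec d \<Longrightarrow> K *\<^sub>v w \<in> carrier_vec d"
  using carrier by simp

lemma scalar_prod_mult_vec_left:
  assumes w: "w \<in> carrier_vec d" and z: "z \<in> carrier_vec d"
  shows "(K *\<^sub>v w) \<bullet> z = - (w \<bullet> (K *\<^sub>v z))"
proof -
  have "(transpose_mat K *\<^sub>v w) \<bullet> z = w \<bullet> (K *\<^sub>v z)"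
    by (rule transpose_vec_mult_scalar[OF carrier z w])
  then show ?thesis using skew w z carrier by simp
qed

lemma mult_vec_mult_vec: "w \<in> carrier_vec d \<Longrightarrow> K *\<^sub>v (K *\<^sub>v w) = - w"
  using carrier square by (simp add: assoc_mult_mat_vec[symmetric, of K d d K d w])

lemma mult_vec_orthogonal_self:
  assumes w: "w \<in> carrier_vec d"
  shows "(K *\<^sub>v w) \<bullet> w = 0"
  using scalar_prod_mult_vec_left[OF w w] comm_scalar_prod[OF w, of "K *\<^sub>v w"] w by simp

lemma adapted_frame_exists:
  "2 * m \<le> d \<Longrightarrow> \<exists>u. orthonormal_upto d (2 * m) u \<and>
     (\<forall>j<2 * m. K *\<^sub>v u j = (if even j then -1 else 1) \<cdot>\<^sub>v u (partner j))"
proof (induction m)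
  case 0
  show ?case by (simp add: orthonormal_upto_def)
next
  case (Suc m)
  then obtain u where u: "orthonormal_upto d (2 * m) u"
    and Ku: "\<forall>j<2 * m. K *\<^sub>v u j = (if even j then -1 else 1) \<cdot>\<^sub>v u (partner j)"
    by auto
  obtain v where v: "v \<in> carrier_vec d" and vv: "v \<bullet> v = 1" and vu: "\<forall>k<2 * m. v \<bullet> u k = 0"
    using orthonormal_extension[OF u] Suc.prems by auto
  have uk: "u k \<in> carrier_vec d" if "k < 2 * m" for k using orthonormal_uptoD(1)[OF u that] .
  have Kv: "K *\<^sub>v v \<in> carrier_vec d" using v by simp
  have Kvv: "(K *\<^sub>v v) \<bullet> v = 0" using mult_vec_orthogonal_self[OF v] .
  have KvKv: "(K *\<^sub>v v) \<bullet> (K *\<^sub>v v) = 1"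
    using scalar_prod_mult_vec_left[OF v Kv] mult_vec_mult_vec[OF v] vv v by simp
  \<comment> \<open>\<open>K\<close> maps the span of the old frame into itself, so \<open>K v\<close> is orthogonal to it as well\<close>
  have Kvu: "(K *\<^sub>v v) \<bullet> u k = 0" if k: "k < 2 * m" for k
  proof -
    have pk: "partner k < 2 * m" using partner_less[OF _ k] by simp
    have "(K *\<^sub>v v) \<bullet> u k = - (v \<bullet> ((if even k then -1 else 1) \<cdot>\<^sub>v u (partner k)))"
      using scalar_prod_mult_vec_left[OF v uk[OF k]] Ku k by simp
    then show ?thesis using vu pk v uk[OF pk] by simp
  qed
  define u' where "u' = u(2 * m := K *\<^sub>v v, 2 * m + 1 := v)"
  have cases: "k < 2 * m \<or> k = 2 * m \<or> k = 2 * m + 1" if "k < 2 * Suc m" for k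
    using that by arith
  have "orthonormal_upto d (2 * Suc m) u'"
    unfolding orthonormal_upto_def
  proof (intro conjI allI impI)
    fix k assume "k < 2 * Suc m"
    then show "u' k \<in> carrier_vec d" using cases uk v Kv by (auto simp: u'_def)
  next
    fix k l assume "k < 2 * Suc m" "l < 2 * Suc m"
    with cases have "k < 2 * m \<or> k = 2 * m \<or> k = 2 * m + 1" "l < 2 * m \<or> l = 2 * m \<or> l = 2 * m + 1"
      by blast+
    then show "u' k \<bullet> u' l = (if k = l then 1 else 0)"
      using orthonormal_uptoD(2)[OF u] vv KvKv Kvv vu Kvu
        comm_scalar_prod[OF v Kv] comm_scalar_prod[OF v uk] comm_scalar_prod[OF Kv uk]
      by (elim disjE) (auto simp: u'_def)
  qed
  moreover have "K *\<^sub>v u' j = (if even j then -1 else 1) \<cdot>\<^sub>v u' (partner j)" if "j < 2 * Suc m" for j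
    using cases[OF that]
  proof (elim disjE)
    assume j: "j < 2 * m"
    then show ?thesis using Ku partner_less[OF _ j] by (auto simp: u'_def)
  qed (auto simp: u'_def partner_def mult_vec_mult_vec[OF v] v)
  ultimately show ?case by blast
qed

lemma similar_Jblk:
  assumes "even d"
  shows "\<exists>U. orth_mat d U \<and> K = U * Jblk d * transpose_mat U"
proof -
  obtain u where u: "orthonormal_upto d d u"
    and Ku: "\<forall>j<d. K *\<^sub>v u j = (if even j then -1 else 1) \<cdot>\<^sub>v u (partner j)"
    using adapted_frame_exists[of "d div 2"] assms by auto
  define U where "U = frame_mat d u"
  have U: "orth_mat d U" using orth_mat_frame_mat[OF u] by (simp add: U_def)
  have KU: "K * U = U * Jblk d"
    unfolding U_def using carrier assms orthonormal_uptoD(1)[OF u] Ku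
    by (intro mult_frame_mat_eq_frame_mat_mult_Jblk) auto
  have "K * U * transpose_mat U = K * (U * transpose_mat U)"
    using carrier by (intro assoc_mult_mat) (auto simp: U_def)
  then have "K = K * U * transpose_mat U"
    using carrier orth_mat_mult_transpose[OF U] by simp
  also have "\<dots> = U * Jblk d * transpose_mat U" using KU by simp
  finally show ?thesis using U by blast
qed

end

lemma similar_Qblk:
  assumes "A \<in> carrier_mat d d" "B \<in> carrier_mat d d" "A * B = 1\<^sub>m d"
  shows "A * Qblk d t * B = cos t \<cdot>\<^sub>m 1\<^sub>m d + sin t \<cdot>\<^sub>m (A * Jblk d * B)"
  unfolding Qblk_eq_cos_sin using assms by (intro similar_scalar_plus_smult) auto

lemma similar_Qblk_if_sin_eq_0:
  assumes "A \<in> carrier_mat d d" "B \<in> carrier_mat d d" "A * B = 1\<^sub>m d" and "sin t = 0"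
  shows "A * Qblk d t * B = Qblk d t"
proof -
  have "A * Qblk d t * B = cos t \<cdot>\<^sub>m 1\<^sub>m d + sin t \<cdot>\<^sub>m (A * Jblk d * B)"
    by (rule similar_Qblk[OF assms(1-3)])
  also have "\<dots> = Qblk d t"
    unfolding Qblk_eq_cos_sin using assms by (intro eq_matI) auto
  finally show ?thesis .
qed

lemma exists_orth_conj_Qblk:
  assumes d: "even d" and A: "A \<in> carrier_mat d d" and B: "B \<in> carrier_mat d d"
    and AB: "A * B = 1\<^sub>m d" and BA: "B * A = 1\<^sub>m d"
    and orth: "orth_mat d (A * Qblk d t * B)" and sin: "sin t \<noteq> 0"
  shows "\<exists>U. orth_mat d U \<and> (\<forall>\<theta>. A * Qblk d \<theta> * B = U * Qblk d \<theta> * transpose_mat U)"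
proof -
  define K where "K = A * Jblk d * B"
  have K: "K \<in> carrier_mat d d"
    unfolding K_def using mult_carrier_mat[OF mult_carrier_mat[OF A Jblk_carrier] B] .
  have "K * K = A * (Jblk d * Jblk d) * B"
    unfolding K_def using A B BA by (intro similar_square) auto
  also have "\<dots> = - 1\<^sub>m d"
    using A B AB by (simp add: Jblk_square[OF d])
  finally have KK: "K * K = - 1\<^sub>m d" .
  have "orth_mat d (cos t \<cdot>\<^sub>m 1\<^sub>m d + sin t \<cdot>\<^sub>m K)"
    using orth similar_Qblk[OF A B AB] by (simp add: K_def)
  then have "transpose_mat K = - K"
    using skew_if_orth_scalar_plus_smult[OF K KK sin_cos_squared_add2 sin] by simp
  then interpret orthogonal_complex_structure d K
    using K KK by unfold_locales
  obtain U where U: "orth_mat d U" and KU: "K = U * Jblk d * transpose_mat U"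
    using similar_Jblk[OF d] by blast
  have "A * Qblk d \<theta> * B = U * Qblk d \<theta> * transpose_mat U" for \<theta>
    using similar_Qblk[OF A B AB] similar_Qblk[of U d "transpose_mat U"] U orth_mat_mult_transpose[OF U]
    by (simp add: K_def[symmetric] KU orth_mat_def)
  then show ?thesis using U by blast
qed

theorem mainTheorem10:
  fixes d :: nat and \<nu> :: "real \<Rightarrow> real" and A Ainv :: "real mat"
  assumes "even d"
    and "\<And>x y. \<nu> (x + y) = \<nu> x + \<nu> y"
    and "A \<in> carrier_mat d d" and "Ainv \<in> carrier_mat d d"
    and "inverts_mat A Ainv" and "inverts_mat Ainv A"
    and "\<And>x. x \<ge> 0 \<Longrightarrow> orth_mat d (A * Qblk d (\<nu> x) * Ainv)"
  shows "\<exists>U. orth_mat d U \<and>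
           (\<forall>x\<ge>0. A * Qblk d (\<nu> x) * Ainv = U * Qblk d (\<nu> x) * transpose_mat U)"
proof -
  note d = assms(1) and A = assms(3) and B = assms(4) and orth = assms(7)
  have AB: "A * Ainv = 1\<^sub>m d" and BA: "Ainv * A = 1\<^sub>m d"
    using assms(3-6) by (simp_all add: inverts_mat_def)
  show ?thesis
  proof (cases "\<exists>x\<ge>0. sin (\<nu> x) \<noteq> 0")
    case True
    then obtain x where "x \<ge> 0" "sin (\<nu> x) \<noteq> 0" by blast
    then show ?thesis
      using exists_orth_conj_Qblk[OF d A B AB BA orth] by blast
  next
    case False
    then have "A * Qblk d (\<nu> x) * Ainv = 1\<^sub>m d * Qblk d (\<nu> x) * transpose_mat (1\<^sub>m d)" if "x \<ge> 0" for x
      using similar_Qblk_if_sin_eq_0[OF A B AB] that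
        left_mult_one_mat[OF Qblk_carrier] right_mult_one_mat[OF Qblk_carrier] by simp
    moreover have "orth_mat d (1\<^sub>m d)" by (simp add: orth_mat_def)
    ultimately show ?thesis by blast
  qed
qed

end
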